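(* There exist a nonzero $\varphi\in L^2(\mathbb{R}^d)$ and a nonzero $\mu\in L^1(\mathbb{R}^{2d})$ such that $B_\mu^\varphi$ is the zero operator on $L^2(\mathbb{R}^d)$.
   Context: For $x,\omega\in\mathbb{R}^d$ let $\pi(x,\omega)f(t)=e^{2\pi i\omega\cdot t}f(t-x)$. The STFT is $V_\varphi\psi(x,\omega)=\int\psi(t)\overline{\varphi(t-x)}e^{-2\pi i\omega\cdot t}dt$, the synthesis is $V_\varphi^*F=\int_{\mathbb{R}^{2d}}F(z)\pi(z)\varphi\,dz$ (weakly), and the time-frequency blurring operator is $B_\mu^\varphi\psi=V_\varphi^*(\mu*V_\varphi\psi)$. *)

theory Defs
  imports "HOL-Analysis.Analysis"
begin

text \<open>R^d is modelled by an arbitrary Euclidean space 'a (dimension DIM('a) = d),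
  R^{2d} by 'a \<times> 'a, with z = (x, \<omega>). Functions are complex valued.\<close>

definition L2 :: "('a::euclidean_space \<Rightarrow> complex) \<Rightarrow> bool" where
  "L2 f \<longleftrightarrow> f \<in> borel_measurable lborel \<and> integrable lborel (\<lambda>x. (cmod (f x))\<^sup>2)"

definition L1 :: "('b::euclidean_space \<Rightarrow> complex) \<Rightarrow> bool" where
  "L1 f \<longleftrightarrow> integrable lborel f"

definition nonzero_ae :: "('b::euclidean_space \<Rightarrow> complex) \<Rightarrow> bool" where
  "nonzero_ae f \<longleftrightarrow> \<not> (AE x in lborel. f x = 0)"

definition stft :: "('a::euclidean_space \<Rightarrow> complex) \<Rightarrow> ('a \<Rightarrow> complex) \<Rightarrow> 'a \<times> 'a \<Rightarrow> complex" where
  "stft \<phi> \<psi> z = (LINT t|lborel. \<psi> t * cnj (\<phi> (t - fst z)) *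
                     exp (- (2 * complex_of_real pi * \<i>) * complex_of_real (snd z \<bullet> t)))"

definition conv :: "('b::euclidean_space \<Rightarrow> complex) \<Rightarrow> ('b \<Rightarrow> complex) \<Rightarrow> 'b \<Rightarrow> complex" where
  "conv \<mu> F z = (LINT w|lborel. \<mu> w * F (z - w))"

text \<open>The blurring operator B_\<mu>^\<phi> \<psi> = V_\<phi>^*(\<mu> * V_\<phi>\<psi>), with V_\<phi>^* defined weakly:
  <B \<psi>, g> = \<integral> (\<mu> * V_\<phi>\<psi>)(z) conj(V_\<phi> g(z)) dz  (since <\<pi>(z)\<phi>, g> = conj(V_\<phi> g(z))).
  B is the zero operator on L^2 iff all these pairings vanish.\<close>
definition blur_pairing ::
  "('a::euclidean_space \<times> 'a \<Rightarrow> complex) \<Rightarrow> ('a \<Rightarrow> complex) \<Rightarrow> ('a \<Rightarrow> complex) \<Rightarrow> ('a \<Rightarrow> complex) \<Rightarrow> complex" where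
  "blur_pairing \<mu> \<phi> \<psi> g = (LINT z|lborel. conv \<mu> (stft \<phi> \<psi>) z * cnj (stft \<phi> g z))"

definition blur_is_zero :: "('a::euclidean_space \<times> 'a \<Rightarrow> complex) \<Rightarrow> ('a \<Rightarrow> complex) \<Rightarrow> bool" where
  "blur_is_zero \<mu> \<phi> \<longleftrightarrow> (\<forall>\<psi> g. L2 \<psi> \<longrightarrow> L2 g \<longrightarrow> blur_pairing \<mu> \<phi> \<psi> g = 0)"

end

theory Submission
  imports Defs "HOL-Probability.Characteristic_Functions" "HOL-Real_Asymp.Real_Asymp"
begin

text \<open>Take for \<open>\<phi>\<close> the indicator of the unit ball and for \<open>\<mu>\<close> the indicator of the unit
  ball around \<open>(c, 0)\<close> with \<open>|c| \<ge> 4\<close>. For fixed \<open>x\<close>, \<open>V\<^sub>\<phi> g (x, -)\<close> is the Fourier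
  transform of \<open>g\<close> restricted to the ball \<open>B(x, 1)\<close>, while by Fubini \<open>(\<mu> * V\<^sub>\<phi> \<psi>)(x, -)\<close>
  is the Fourier transform of \<open>\<psi>\<close> times a kernel supported in \<open>B(x - c, 2)\<close>. These two
  functions have supports at distance at least 1, so the pairing of their Fourier transforms
  vanishes; integrating over \<open>x\<close> gives \<open>\<langle>B \<psi>, g\<rangle> = 0\<close>.

  That pairing is handled by Gaussian regularisation: inserting \<open>exp (- pi |\<omega>|^2 / n)\<close> turns it
  into the double integral of \<open>f t * cnj (h s) * n^(d/2) * exp (- pi n |t - s|^2)\<close>, which is
  \<open>O (n^(d/2) exp (- pi n))\<close> because \<open>|t - s| \<ge> 1\<close> wherever the integrand is nonzero.\<close>

section \<open>Fourier transform and Gaussians\<close>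

definition fourier_char :: "real \<Rightarrow> complex" where
  "fourier_char s = exp (- (2 * complex_of_real pi * \<i>) * complex_of_real s)"

definition fourier :: "('a::euclidean_space \<Rightarrow> complex) \<Rightarrow> 'a \<Rightarrow> complex" where
  "fourier f \<omega> = (\<integral>t. f t * fourier_char (\<omega> \<bullet> t) \<partial>lborel)"

definition gaussian :: "real \<Rightarrow> 'a::real_normed_vector \<Rightarrow> real" where
  "gaussian n x = exp (- pi * norm x ^ 2 / n)"

lemma norm_fourier_char [simp]: "norm (fourier_char s) = 1"
  unfolding fourier_char_def by (simp add: norm_exp_eq_Re)

lemma fourier_char_0 [simp]: "fourier_char 0 = 1"
  by (simp add: fourier_char_def)

lemma fourier_char_add: "fourier_char (a + b) = fourier_char a * fourier_char b"
  unfolding fourier_char_def by (simp add: distrib_left exp_add[symmetric])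

lemma fourier_char_sum: "finite A \<Longrightarrow> fourier_char (\<Sum>i\<in>A. f i) = (\<Prod>i\<in>A. fourier_char (f i))"
  by (induction A rule: finite_induct) (simp_all add: fourier_char_add)

lemma cnj_fourier_char: "cnj (fourier_char s) = fourier_char (- s)"
  unfolding fourier_char_def exp_cnj by simp

lemma borel_measurable_fourier_char [measurable]: "fourier_char \<in> borel_measurable borel"
  unfolding fourier_char_def by (intro borel_measurable_continuous_onI continuous_intros)

lemma borel_measurable_cnj [measurable]: "cnj \<in> borel_measurable borel"
  by (intro borel_measurable_continuous_onI continuous_intros)

lemma measurable_fst_lborel [measurable]:
  "fst \<in> (lborel :: ('a::euclidean_space \<times> 'b::euclidean_space) measure) \<rightarrow>\<^sub>M borel"
  by (subst lborel_prod[symmetric]) measurable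

lemma measurable_snd_lborel [measurable]:
  "snd \<in> (lborel :: ('a::euclidean_space \<times> 'b::euclidean_space) measure) \<rightarrow>\<^sub>M borel"
  by (subst lborel_prod[symmetric]) measurable

lemma integrable_mult_fourier_char:
  fixes f :: "'a::euclidean_space \<Rightarrow> complex"
  assumes "integrable lborel f"
  shows "integrable lborel (\<lambda>t. f t * fourier_char (\<omega> \<bullet> t))"
proof (rule Bochner_Integration.integrable_bound[OF assms])
  have [measurable]: "f \<in> borel_measurable lborel"
    using assms by (rule borel_measurable_integrable)
  show "(\<lambda>t. f t * fourier_char (\<omega> \<bullet> t)) \<in> borel_measurable lborel" by measurable
qed (auto simp: norm_mult)

lemma integrable_indicator_complex:
  "A \<in> sets M \<Longrightarrow> emeasure M A < \<infinity> \<Longrightarrow> integrable M (indicator A :: _ \<Rightarrow> complex)"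
  using integrable_of_real[OF integrable_real_indicator, of A M] by (simp add: of_real_indicator)

lemma (in pair_sigma_finite) integrable_mult_pair:
  fixes u :: "_ \<Rightarrow> 'c::{real_normed_field, banach, second_countable_topology}"
  assumes u: "integrable M1 u" and v: "integrable M2 v"
  shows "integrable (M1 \<Otimes>\<^sub>M M2) (\<lambda>p. u (fst p) * v (snd p))"
proof (rule Fubini_integrable)
  have [measurable]: "u \<in> borel_measurable M1" "v \<in> borel_measurable M2"
    using u v by (auto intro: borel_measurable_integrable)
  show "(\<lambda>p. u (fst p) * v (snd p)) \<in> borel_measurable (M1 \<Otimes>\<^sub>M M2)" by measurable
  show "integrable M1 (\<lambda>x. \<integral>y. norm (u (fst (x, y)) * v (snd (x, y))) \<partial>M2)"
    using u by (simp add: norm_mult integrable_mult_left integrable_norm)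
  show "AE x in M1. integrable M2 (\<lambda>y. u (fst (x, y)) * v (snd (x, y)))"
    using v by (auto intro: integrable_mult_right)
qed

lemma (in pair_sigma_finite) integral_mult_pair:
  fixes u :: "_ \<Rightarrow> 'c::{real_normed_field, banach, second_countable_topology}"
  assumes u: "integrable M1 u" and v: "integrable M2 v"
  shows "(\<integral>p. u (fst p) * v (snd p) \<partial>(M1 \<Otimes>\<^sub>M M2)) = (\<integral>x. u x \<partial>M1) * (\<integral>y. v y \<partial>M2)"
  using integral_fst[of "\<lambda>x y. u x * v y"] integrable_mult_pair[OF u v]
  by (simp add: case_prod_beta')

lemma lborel_integral_prod_Basis:
  fixes f :: "'a::euclidean_space \<Rightarrow> real \<Rightarrow> 'c::{real_normed_field, banach, second_countable_topology}"
  assumes int: "\<And>b. b \<in> Basis \<Longrightarrow> integrable lborel (f b)"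
  shows "integrable lborel (\<lambda>x. \<Prod>b\<in>Basis. f b (x \<bullet> b))"
    and "(\<integral>x. (\<Prod>b\<in>Basis. f b (x \<bullet> b)) \<partial>lborel) = (\<Prod>b\<in>Basis. \<integral>y. f b y \<partial>lborel)"
proof -
  interpret product_sigma_finite "\<lambda>_::'a. lborel :: real measure" by standard
  have [measurable]: "f b \<in> borel_measurable borel" if "b \<in> Basis" for b
    using int[OF that] by (simp add: borel_measurable_integrable)
  have coord: "(\<lambda>x. \<Prod>b\<in>Basis. f b ((\<Sum>b\<in>Basis. x b *\<^sub>R b) \<bullet> b)) = (\<lambda>x. \<Prod>b\<in>Basis. f b (x b))"
    by (intro ext prod.cong refl)
       (simp add: inner_sum_left inner_Basis if_distrib if_distribR sum.delta cong: if_cong)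
  have "integrable (\<Pi>\<^sub>M b\<in>Basis. lborel) (\<lambda>x. \<Prod>b\<in>Basis. f b (x b))"
    by (rule product_integrable_prod) (auto intro: int)
  then show "integrable lborel (\<lambda>x. \<Prod>b\<in>Basis. f b (x \<bullet> b))"
    by (subst lborel_eq) (subst integrable_distr_eq, auto simp: coord)
  have "(\<integral>x. (\<Prod>b\<in>Basis. f b (x \<bullet> b)) \<partial>lborel)
      = (\<integral>x. (\<Prod>b\<in>Basis. f b ((\<Sum>b\<in>Basis. x b *\<^sub>R b) \<bullet> b)) \<partial>(\<Pi>\<^sub>M b\<in>Basis. lborel))"
    by (subst lborel_eq) (rule integral_distr, auto)
  also have "\<dots> = (\<Prod>b\<in>Basis. \<integral>y. f b y \<partial>lborel)"
    unfolding coord by (rule product_integral_prod) (auto intro: int)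
  finally show "(\<integral>x. (\<Prod>b\<in>Basis. f b (x \<bullet> b)) \<partial>lborel) = (\<Prod>b\<in>Basis. \<integral>y. f b y \<partial>lborel)" .
qed

lemma borel_measurable_gaussian [measurable]: "gaussian n \<in> borel_measurable borel"
  unfolding gaussian_def[abs_def] by measurable

lemma gaussian_nonneg [simp]: "0 \<le> gaussian n x"
  by (simp add: gaussian_def)

lemma gaussian_real: "gaussian n (y::real) = exp (- pi * y\<^sup>2 / n)"
  by (simp add: gaussian_def)

lemma gaussian_eq_prod_Basis: "gaussian n (x::'a::euclidean_space) = (\<Prod>b\<in>Basis. gaussian n (x \<bullet> b))"
proof -
  have "norm x ^ 2 = (\<Sum>b\<in>Basis. (x \<bullet> b)\<^sup>2)"
    by (simp add: norm_eq_sqrt_inner euclidean_inner[of x x] power2_eq_square sum_nonneg)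
  then show ?thesis
    by (simp add: gaussian_def sum_distrib_left sum_divide_distrib exp_sum[symmetric])
qed

lemma integrable_gaussian_real:
  assumes n: "n > 0"
  shows "integrable lborel (gaussian n :: real \<Rightarrow> real)"
proof -
  define \<sigma> where "\<sigma> = sqrt (n / (2 * pi))"
  have \<sigma>: "\<sigma> > 0" "\<sigma>\<^sup>2 = n / (2 * pi)"
    using n by (simp_all add: \<sigma>_def)
  have "gaussian n = (\<lambda>y. sqrt n * normal_density 0 \<sigma> y)"
    using n \<sigma> by (simp add: fun_eq_iff gaussian_real normal_density_def field_simps)
  then show ?thesis
    using \<sigma> by (simp add: integrable_normal_density)
qed

lemma fourier_gaussian_real:
  assumes n: "n > 0"
  shows "(\<integral>y. complex_of_real (gaussian n y) * fourier_char (y * v) \<partial>lborel)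
       = complex_of_real (sqrt n * gaussian (1 / n) v)"
proof -
  define a where "a = sqrt (n / (2 * pi))"
  have a: "a > 0" "a\<^sup>2 = n / (2 * pi)"
    using n by (simp_all add: a_def)
  define t where "t = - 2 * pi * a * v"
  have rescale: "complex_of_real (gaussian n (a * x)) * fourier_char (a * x * v)
      = complex_of_real (sqrt (2 * pi)) * (complex_of_real (std_normal_density x) * iexp (t * x))" for x
  proof -
    have "- pi * (a * x)\<^sup>2 / n = - x\<^sup>2 / 2"
      using n a by (simp add: power_mult_distrib field_simps)
    moreover have "fourier_char (a * x * v) = iexp (t * x)"
      unfolding fourier_char_def t_def by (rule arg_cong[where f=exp]) (simp add: field_simps)
    ultimately show ?thesis
      unfolding gaussian_real std_normal_density_def by (simp add: field_simps)
  qed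
  have char: "(\<integral>x. complex_of_real (std_normal_density x) * iexp (t * x) \<partial>lborel)
      = complex_of_real (exp (- t\<^sup>2 / 2))"
    using char_std_normal_distribution
    unfolding char_def by (subst (asm) integral_density) (auto simp: scaleR_conv_of_real fun_eq_iff)
  have "(\<integral>y. complex_of_real (gaussian n y) * fourier_char (y * v) \<partial>lborel)
      = a *\<^sub>R (\<integral>x. complex_of_real (gaussian n (a * x)) * fourier_char (a * x * v) \<partial>lborel)"
    using lborel_integral_real_affine[of a "\<lambda>y. complex_of_real (gaussian n y) * fourier_char (y * v)" 0] a
    by simp
  also have "\<dots> = a *\<^sub>R (complex_of_real (sqrt (2 * pi)) * complex_of_real (exp (- t\<^sup>2 / 2)))"
    unfolding rescale using char by simp
  also have "\<dots> = complex_of_real (sqrt n * gaussian (1 / n) v)"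
  proof -
    have "a * sqrt (2 * pi) = sqrt n"
      using n by (simp add: a_def real_sqrt_divide)
    moreover have "- t\<^sup>2 / 2 = - pi * v\<^sup>2 / (1 / n)"
      using a n unfolding t_def by (simp add: power_mult_distrib field_simps power2_eq_square)
    ultimately show ?thesis
      by (simp add: gaussian_real scaleR_conv_of_real mult.assoc[symmetric] flip: of_real_mult)
  qed
  finally show ?thesis .
qed

lemma integrable_gaussian:
  assumes "n > 0"
  shows "integrable lborel (gaussian n :: 'a::euclidean_space \<Rightarrow> real)"
proof -
  have "gaussian n = (\<lambda>x::'a. \<Prod>b\<in>Basis. gaussian n (x \<bullet> b))"
    by (rule ext) (rule gaussian_eq_prod_Basis)
  then show ?thesis
    using lborel_integral_prod_Basis(1)[of "\<lambda>_. gaussian n"] integrable_gaussian_real[OF assms]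
    by simp
qed

lemma fourier_gaussian:
  assumes n: "n > 0"
  shows "fourier (\<lambda>x. complex_of_real (gaussian n x)) u
       = complex_of_real (sqrt n ^ DIM('a) * gaussian (1 / n) (u::'a::euclidean_space))"
proof -
  have separate: "complex_of_real (gaussian n x) * fourier_char (u \<bullet> x)
      = (\<Prod>b\<in>Basis. complex_of_real (gaussian n (x \<bullet> b)) * fourier_char ((x \<bullet> b) * (u \<bullet> b)))" for x
    by (subst gaussian_eq_prod_Basis, subst euclidean_inner)
       (simp add: fourier_char_sum prod.distrib inner_commute mult.commute)
  have integrable: "integrable lborel (\<lambda>y. complex_of_real (gaussian n y) * fourier_char (y * w))" for w
    by (rule Bochner_Integration.integrable_bound[OF integrable_gaussian_real[OF n]]) (auto simp: norm_mult)
  have "fourier (\<lambda>x. complex_of_real (gaussian n x)) u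
      = (\<Prod>b\<in>Basis. \<integral>y. complex_of_real (gaussian n y) * fourier_char (y * (u \<bullet> b)) \<partial>lborel)"
    unfolding fourier_def separate by (rule lborel_integral_prod_Basis(2)[OF integrable])
  also have "\<dots> = (\<Prod>b\<in>Basis. complex_of_real (sqrt n * gaussian (1 / n) (u \<bullet> b)))"
    by (simp add: fourier_gaussian_real n)
  also have "\<dots> = complex_of_real (sqrt n ^ DIM('a) * gaussian (1 / n) u)"
    by (subst gaussian_eq_prod_Basis[of _ u]) (simp add: prod.distrib flip: of_real_prod)
  finally show ?thesis .
qed

section \<open>Fourier transforms of functions with separated supports\<close>

lemma fourier_mult_cnj_fourier:
  fixes f h :: "'a::euclidean_space \<Rightarrow> complex"
  assumes f: "integrable lborel f" and h: "integrable lborel h"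
  shows "fourier f \<omega> * cnj (fourier h \<omega>)
       = (\<integral>p. f (fst p) * cnj (h (snd p)) * fourier_char (\<omega> \<bullet> (fst p - snd p)) \<partial>lborel)"
proof -
  have pointwise: "(f (fst p) * fourier_char (\<omega> \<bullet> fst p)) * cnj (h (snd p) * fourier_char (\<omega> \<bullet> snd p))
      = f (fst p) * cnj (h (snd p)) * fourier_char (\<omega> \<bullet> (fst p - snd p))" for p
    by (simp add: cnj_fourier_char inner_diff_right fourier_char_add[symmetric])
  have "fourier f \<omega> * cnj (fourier h \<omega>)
      = (\<integral>p. (f (fst p) * fourier_char (\<omega> \<bullet> fst p)) * cnj (h (snd p) * fourier_char (\<omega> \<bullet> snd p))
          \<partial>(lborel \<Otimes>\<^sub>M lborel))"
    unfolding fourier_def Bochner_Integration.integral_cnj[symmetric]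
    by (rule lborel_pair.integral_mult_pair[symmetric, OF integrable_mult_fourier_char[OF f]
          integrable_cnj[OF integrable_mult_fourier_char[OF h]]])
  then show ?thesis
    by (simp only: pointwise lborel_prod)
qed

lemma gaussian_regularized_parseval:
  fixes f h :: "'a::euclidean_space \<Rightarrow> complex"
  assumes f: "integrable lborel f" and h: "integrable lborel h" and n: "n > 0"
  shows "(\<integral>\<omega>. complex_of_real (gaussian n \<omega>) * (fourier f \<omega> * cnj (fourier h \<omega>)) \<partial>lborel)
       = sqrt n ^ DIM('a) * (\<integral>p. f (fst p) * cnj (h (snd p)) * gaussian (1 / n) (fst p - snd p) \<partial>lborel)"
proof -
  have [measurable]: "f \<in> borel_measurable borel" "h \<in> borel_measurable borel"
    using f h by (auto dest: borel_measurable_integrable)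
  define \<Phi> where "\<Phi> \<omega> p = complex_of_real (gaussian n \<omega>) * (f (fst p) * cnj (h (snd p)))
      * fourier_char (\<omega> \<bullet> (fst p - snd p))" for \<omega> :: 'a and p :: "'a \<times> 'a"
  have fh: "integrable lborel (\<lambda>p::'a \<times> 'a. f (fst p) * cnj (h (snd p)))"
    using lborel_pair.integrable_mult_pair[OF f integrable_cnj[OF h]] by (simp add: lborel_prod)
  have "integrable (lborel \<Otimes>\<^sub>M lborel) (\<lambda>q. gaussian n (fst q) * norm (f (fst (snd q)) * cnj (h (snd (snd q)))))"
    by (rule lborel_pair.integrable_mult_pair[OF integrable_gaussian[OF n] integrable_norm[OF fh]])
  then have \<Phi>_integrable: "integrable (lborel \<Otimes>\<^sub>M lborel) (case_prod \<Phi>)"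
  proof (rule Bochner_Integration.integrable_bound)
    show "case_prod \<Phi> \<in> borel_measurable (lborel \<Otimes>\<^sub>M lborel)"
      unfolding \<Phi>_def split_beta' by measurable
  qed (auto simp: \<Phi>_def norm_mult split_beta')
  have inner_p: "(\<integral>p. \<Phi> \<omega> p \<partial>lborel) = complex_of_real (gaussian n \<omega>) * (fourier f \<omega> * cnj (fourier h \<omega>))" for \<omega>
    by (simp add: \<Phi>_def fourier_mult_cnj_fourier[OF f h] mult.assoc)
  have inner_\<omega>: "(\<integral>\<omega>. \<Phi> \<omega> p \<partial>lborel)
      = f (fst p) * cnj (h (snd p)) * (sqrt n ^ DIM('a) * gaussian (1 / n) (fst p - snd p))" for p
  proof -
    have "\<Phi> \<omega> p = f (fst p) * cnj (h (snd p))
        * (complex_of_real (gaussian n \<omega>) * fourier_char ((fst p - snd p) \<bullet> \<omega>))" for \<omega>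
      by (simp add: \<Phi>_def inner_commute ac_simps)
    then show ?thesis
      using fourier_gaussian[OF n, of "fst p - snd p"] by (simp add: fourier_def)
  qed
  have "(\<integral>\<omega>. complex_of_real (gaussian n \<omega>) * (fourier f \<omega> * cnj (fourier h \<omega>)) \<partial>lborel)
      = (\<integral>\<omega>. \<integral>p. \<Phi> \<omega> p \<partial>lborel \<partial>lborel)"
    by (simp add: inner_p)
  also have "\<dots> = (\<integral>p. \<integral>\<omega>. \<Phi> \<omega> p \<partial>lborel \<partial>lborel)"
    using lborel_pair.Fubini_integral[OF \<Phi>_integrable] by (simp add: lborel_prod)
  also have "\<dots> = (\<integral>p. sqrt n ^ DIM('a) * (f (fst p) * cnj (h (snd p)) * gaussian (1 / n) (fst p - snd p)) \<partial>lborel)"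
    by (simp add: inner_\<omega> ac_simps)
  finally show ?thesis
    by simp
qed

lemma norm_integral_gaussian_separated_le:
  fixes f h :: "'a::euclidean_space \<Rightarrow> complex"
  assumes f: "integrable lborel f" and h: "integrable lborel h" and n: "n > 0"
    and separated: "\<And>t s. f t \<noteq> 0 \<Longrightarrow> h s \<noteq> 0 \<Longrightarrow> 1 \<le> dist t s"
  shows "norm (\<integral>p. f (fst p) * cnj (h (snd p)) * gaussian (1 / n) (fst p - snd p) \<partial>lborel)
       \<le> exp (- pi * n) * ((\<integral>t. norm (f t) \<partial>lborel) * (\<integral>s. norm (h s) \<partial>lborel))"
proof -
  have [measurable]: "f \<in> borel_measurable borel" "h \<in> borel_measurable borel"
    using f h by (auto dest: borel_measurable_integrable)
  let ?F = "\<lambda>p::'a \<times> 'a. f (fst p) * cnj (h (snd p)) * gaussian (1 / n) (fst p - snd p)"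
  let ?g = "\<lambda>p::'a \<times> 'a. exp (- pi * n) * (norm (f (fst p)) * norm (h (snd p)))"
  have g_integral: "integrable lborel ?g"
    "(\<integral>p. ?g p \<partial>lborel) = exp (- pi * n) * ((\<integral>t. norm (f t) \<partial>lborel) * (\<integral>s. norm (h s) \<partial>lborel))"
    using lborel_pair.integrable_mult_pair[OF integrable_norm[OF f] integrable_norm[OF h]]
      lborel_pair.integral_mult_pair[OF integrable_norm[OF f] integrable_norm[OF h]]
    by (simp_all add: lborel_prod)
  have bound: "norm (?F p) \<le> ?g p" for p
  proof (cases "f (fst p) = 0 \<or> h (snd p) = 0")
    case False
    then have "1 \<le> norm (fst p - snd p)"
      using separated by (auto simp: dist_norm)
    then have "n \<le> norm (fst p - snd p) ^ 2 / (1 / n)"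
      using n by (simp add: one_le_power)
    then have "gaussian (1 / n) (fst p - snd p) \<le> exp (- pi * n)"
      unfolding gaussian_def by simp
    then have "norm (f (fst p)) * norm (h (snd p)) * gaussian (1 / n) (fst p - snd p)
        \<le> norm (f (fst p)) * norm (h (snd p)) * exp (- pi * n)"
      by (rule mult_left_mono) simp
    then show ?thesis
      by (simp add: norm_mult mult.commute)
  qed auto
  have "integrable lborel ?F"
    by (rule Bochner_Integration.integrable_bound[OF g_integral(1)]) (use bound in auto)
  from Bochner_Integration.integral_norm_bound_integral[OF this g_integral(1) bound] g_integral(2)
  show ?thesis by simp
qed

lemma tendsto_integral_gaussian_mult:
  fixes F :: "'a::euclidean_space \<Rightarrow> complex"
  assumes F: "integrable lborel F"
  shows "(\<lambda>k. \<integral>\<omega>. complex_of_real (gaussian (Suc k) \<omega>) * F \<omega> \<partial>lborel) \<longlonglongrightarrow> (\<integral>\<omega>. F \<omega> \<partial>lborel)"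
proof (rule integral_dominated_convergence[where w="\<lambda>\<omega>. norm (F \<omega>)"])
  show "F \<in> borel_measurable lborel"
    using F by (rule borel_measurable_integrable)
  then show "(\<lambda>\<omega>. complex_of_real (gaussian (Suc k) \<omega>) * F \<omega>) \<in> borel_measurable lborel" for k
    by measurable
  show "integrable lborel (\<lambda>\<omega>. norm (F \<omega>))"
    using F by (rule integrable_norm)
  show "AE \<omega> in lborel. (\<lambda>k. complex_of_real (gaussian (Suc k) \<omega>) * F \<omega>) \<longlonglongrightarrow> F \<omega>"
  proof (rule AE_I2)
    fix \<omega> :: 'a
    have "(\<lambda>k. - pi * norm \<omega> ^ 2 * inverse (real (Suc k))) \<longlonglongrightarrow> - pi * norm \<omega> ^ 2 * 0"
      by (intro tendsto_mult tendsto_const LIMSEQ_inverse_real_of_nat)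
    then have "(\<lambda>k. gaussian (Suc k) \<omega>) \<longlonglongrightarrow> exp 0"
      unfolding gaussian_def by (intro tendsto_exp) (simp add: divide_inverse)
    then have "(\<lambda>k. complex_of_real (gaussian (Suc k) \<omega>) * F \<omega>) \<longlonglongrightarrow> complex_of_real 1 * F \<omega>"
      by (intro tendsto_intros) simp
    then show "(\<lambda>k. complex_of_real (gaussian (Suc k) \<omega>) * F \<omega>) \<longlonglongrightarrow> F \<omega>"
      by simp
  qed
  show "AE \<omega> in lborel. norm (complex_of_real (gaussian (Suc k) \<omega>) * F \<omega>) \<le> norm (F \<omega>)" for k
    by (intro AE_I2) (simp add: gaussian_def norm_mult mult_left_le_one_le)
qed

lemma integral_fourier_mult_cnj_eq_0_if_separated:
  fixes f h :: "'a::euclidean_space \<Rightarrow> complex"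
  assumes f: "integrable lborel f" and h: "integrable lborel h"
    and separated: "\<And>t s. f t \<noteq> 0 \<Longrightarrow> h s \<noteq> 0 \<Longrightarrow> 1 \<le> dist t s"
    and pairing: "integrable lborel (\<lambda>\<omega>. fourier f \<omega> * cnj (fourier h \<omega>))"
  shows "(\<integral>\<omega>. fourier f \<omega> * cnj (fourier h \<omega>) \<partial>lborel) = 0"
proof -
  let ?I = "\<lambda>k. \<integral>\<omega>. complex_of_real (gaussian (Suc k) \<omega>) * (fourier f \<omega> * cnj (fourier h \<omega>)) \<partial>lborel"
  define C where "C = (\<integral>t. norm (f t) \<partial>lborel) * (\<integral>s. norm (h s) \<partial>lborel)"
  have "((\<lambda>x::real. sqrt x ^ DIM('a) * exp (- pi * x)) \<longlongrightarrow> 0) at_top"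
    by real_asymp
  then have "(\<lambda>k. sqrt (Suc k) ^ DIM('a) * exp (- pi * Suc k)) \<longlonglongrightarrow> 0"
    by (rule filterlim_compose) (rule filterlim_compose[OF filterlim_real_sequentially filterlim_Suc])
  then have bound_to_0: "(\<lambda>k. sqrt (Suc k) ^ DIM('a) * exp (- pi * Suc k) * C) \<longlonglongrightarrow> 0"
    by (rule tendsto_mult_left_zero)
  have "norm (?I k) \<le> sqrt (Suc k) ^ DIM('a) * exp (- pi * Suc k) * C" for k
  proof -
    have "norm (?I k) = sqrt (Suc k) ^ DIM('a)
        * norm (\<integral>p. f (fst p) * cnj (h (snd p)) * gaussian (1 / Suc k) (fst p - snd p) \<partial>lborel)"
      by (simp add: gaussian_regularized_parseval[OF f h] norm_mult norm_power)
    also have "\<dots> \<le> sqrt (Suc k) ^ DIM('a) * (exp (- pi * Suc k) * C)"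
      unfolding C_def
      by (intro mult_left_mono norm_integral_gaussian_separated_le[OF f h] separated) auto
    finally show ?thesis
      by (simp add: mult.assoc)
  qed
  then have "?I \<longlonglongrightarrow> 0"
    by (intro Lim_null_comparison[OF always_eventually bound_to_0]) simp
  with tendsto_integral_gaussian_mult[OF pairing] show ?thesis
    by (rule LIMSEQ_unique)
qed

lemma cnj_indicator [simp]: "cnj (indicator S x) = indicator S x"
  by (simp add: indicator_def)

section \<open>Blurring with ball indicators\<close>

lemma stft_cball_window:
  "stft (indicator (cball 0 1)) g (x, \<omega>) = fourier (\<lambda>t. g t * indicator (cball x 1) t) \<omega>"
  unfolding stft_def fourier_def fourier_char_def cnj_indicator
  by (simp add: indicator_def dist_norm norm_minus_commute)

lemma integrable_L2_mult_indicator: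
  assumes g: "L2 g" and S: "S \<in> sets borel" "emeasure lborel S < \<infinity>"
  shows "integrable lborel (\<lambda>t. g t * indicator S t)"
proof (rule Bochner_Integration.integrable_bound)
  have [measurable]: "g \<in> borel_measurable lborel"
    using g by (simp add: L2_def)
  show "integrable lborel (\<lambda>t. (cmod (g t))\<^sup>2 + indicator S t :: real)"
    using g S by (intro Bochner_Integration.integrable_add integrable_real_indicator) (auto simp: L2_def)
  show "(\<lambda>t. g t * indicator S t) \<in> borel_measurable lborel"
    using S by measurable
  have "cmod (g t) \<le> (cmod (g t))\<^sup>2 + 1" for t
  proof -
    have "2 * cmod (g t) \<le> (cmod (g t))\<^sup>2 + 1"
      using zero_le_power2[of "cmod (g t) - 1"] by (simp add: power2_diff)
    then show ?thesis
      using norm_ge_zero[of "g t"] by linarith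
  qed
  then show "AE t in lborel. norm (g t * indicator S t) \<le> norm ((cmod (g t))\<^sup>2 + indicator S t :: real)"
    by (intro AE_I2) (simp add: indicator_def norm_mult)
qed

definition blur_density :: "'a::euclidean_space \<Rightarrow> 'a \<Rightarrow> 'a \<Rightarrow> 'a \<times> 'a \<Rightarrow> complex" where
  "blur_density c x t w =
     indicator (cball (c, 0) 1) w * indicator (cball (x - fst w) 1) t * cnj (fourier_char (snd w \<bullet> t))"

definition blur_kernel :: "'a::euclidean_space \<Rightarrow> 'a \<Rightarrow> 'a \<Rightarrow> complex" where
  "blur_kernel c x t = (\<integral>w. blur_density c x t w \<partial>lborel)"

lemma norm_blur_density_le:
  "norm (blur_density c x t w) \<le> indicator (cball (c, 0) 1) w * indicator (cball (x - c) 2) t"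
proof (cases "w \<in> cball (c, 0) 1 \<and> t \<in> cball (x - fst w) 1")
  case True
  then have "dist c (fst w) \<le> 1"
    using dist_fst_le[of "(c, 0)" w] by simp
  then have "dist (x - c) t \<le> 2"
    using True dist_triangle[of "x - c" t "x - fst w"]
    by (simp add: dist_norm norm_minus_commute algebra_simps)
  with True show ?thesis
    by (simp add: blur_density_def norm_mult)
qed (auto simp: blur_density_def)

lemma borel_measurable_blur_density [measurable]:
  "(\<lambda>p. blur_density c x (fst p) (snd p)) \<in> borel_measurable (lborel \<Otimes>\<^sub>M lborel)"
  unfolding blur_density_def indicator_def mem_cball by measurable

lemma integrable_blur_density_product:
  assumes \<psi>: "L2 \<psi>"
  shows "integrable (lborel \<Otimes>\<^sub>M lborel)
           (\<lambda>(t, w). \<psi> t * fourier_char (\<omega> \<bullet> t) * blur_density c x t w)"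
  unfolding split_beta'
proof (rule Bochner_Integration.integrable_bound)
  have [measurable]: "\<psi> \<in> borel_measurable borel"
    using \<psi> by (simp add: L2_def)
  show "integrable (lborel \<Otimes>\<^sub>M lborel)
      (\<lambda>p. norm (\<psi> (fst p) * indicator (cball (x - c) 2) (fst p)) * indicator (cball (c, 0::'a) 1) (snd p))"
    by (intro lborel_pair.integrable_mult_pair integrable_norm integrable_L2_mult_indicator[OF \<psi>]
        integrable_real_indicator) (auto simp: emeasure_cball)
  show "(\<lambda>p. \<psi> (fst p) * fourier_char (\<omega> \<bullet> fst p) * blur_density c x (fst p) (snd p))
      \<in> borel_measurable (lborel \<Otimes>\<^sub>M lborel)"
    by measurable
  have "norm (\<psi> t * fourier_char (\<omega> \<bullet> t) * blur_density c x t w)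
      \<le> norm (\<psi> t) * (indicator (cball (c, 0) 1) w * indicator (cball (x - c) 2) t)" for t w
    by (simp add: norm_mult mult_left_mono norm_blur_density_le)
  also have "\<dots> t w = norm (norm (\<psi> t * indicator (cball (x - c) 2) t) * indicator (cball (c, 0::'a) 1) w)" for t w
    by (simp add: norm_mult indicator_def)
  finally show "AE p in lborel \<Otimes>\<^sub>M lborel.
      norm (\<psi> (fst p) * fourier_char (\<omega> \<bullet> fst p) * blur_density c x (fst p) (snd p))
      \<le> norm (norm (\<psi> (fst p) * indicator (cball (x - c) 2) (fst p)) * indicator (cball (c, 0::'a) 1) (snd p))"
    by (intro AE_I2)
qed

lemma integrable_mult_blur_kernel:
  assumes "L2 \<psi>"
  shows "integrable lborel (\<lambda>t. \<psi> t * blur_kernel c x t)"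
  using lborel_pair.integrable_fst'[OF integrable_blur_density_product[OF assms, of 0]]
  by (simp add: blur_kernel_def)

lemma blur_kernel_eq_0: "t \<notin> cball (x - c) 2 \<Longrightarrow> blur_kernel c x t = 0"
  using norm_blur_density_le[of c x t] by (simp add: blur_kernel_def)

lemma conv_stft_cball_eq_fourier:
  assumes \<psi>: "L2 \<psi>"
  shows "conv (indicator (cball (c, 0) 1)) (stft (indicator (cball 0 1)) \<psi>) (x, \<omega>)
       = fourier (\<lambda>t. \<psi> t * blur_kernel c x t) \<omega>"
proof -
  let ?\<Psi> = "\<lambda>t w. \<psi> t * fourier_char (\<omega> \<bullet> t) * blur_density c x t w"
  have "indicator (cball (c, 0) 1) w * stft (indicator (cball 0 1)) \<psi> ((x, \<omega>) - w)
      = (\<integral>t. ?\<Psi> t w \<partial>lborel)" for w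
  proof -
    have "?\<Psi> t w = indicator (cball (c, 0) 1) w
        * (\<psi> t * indicator (cball (x - fst w) 1) t * fourier_char ((\<omega> - snd w) \<bullet> t))" for t
      by (simp add: blur_density_def inner_diff_left cnj_fourier_char fourier_char_add[symmetric] ac_simps)
    then have "(\<integral>t. ?\<Psi> t w \<partial>lborel) = indicator (cball (c, 0) 1) w
        * (\<integral>t. \<psi> t * indicator (cball (x - fst w) 1) t * fourier_char ((\<omega> - snd w) \<bullet> t) \<partial>lborel)"
      by (simp only: integral_mult_right_zero)
    then show ?thesis
      by (cases w) (simp add: stft_cball_window fourier_def)
  qed
  then have "conv (indicator (cball (c, 0) 1)) (stft (indicator (cball 0 1)) \<psi>) (x, \<omega>)
      = (\<integral>w. \<integral>t. ?\<Psi> t w \<partial>lborel \<partial>lborel)"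
    by (simp add: conv_def)
  also have "\<dots> = (\<integral>t. \<integral>w. ?\<Psi> t w \<partial>lborel \<partial>lborel)"
    by (rule lborel_pair.Fubini_integral[OF integrable_blur_density_product[OF \<psi>]])
  also have "\<dots> = fourier (\<lambda>t. \<psi> t * blur_kernel c x t) \<omega>"
    by (simp add: fourier_def blur_kernel_def ac_simps)
  finally show ?thesis .
qed

lemma blur_pairing_slice_eq_0:
  assumes \<psi>: "L2 \<psi>" and g: "L2 g" and c: "4 \<le> norm c"
    and slice: "integrable lborel (\<lambda>\<omega>. conv (indicator (cball (c, 0) 1)) (stft (indicator (cball 0 1)) \<psi>) (x, \<omega>)
                  * cnj (stft (indicator (cball 0 1)) g (x, \<omega>)))"
  shows "(\<integral>\<omega>. conv (indicator (cball (c, 0) 1)) (stft (indicator (cball 0 1)) \<psi>) (x, \<omega>)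
                  * cnj (stft (indicator (cball 0 1)) g (x, \<omega>)) \<partial>lborel) = 0"
proof -
  let ?f = "\<lambda>t. \<psi> t * blur_kernel c x t"
  let ?h = "\<lambda>t. g t * indicator (cball x 1) t"
  have h: "integrable lborel ?h"
    using g by (rule integrable_L2_mult_indicator) (auto simp: emeasure_cball)
  have separated: "1 \<le> dist t s" if "?f t \<noteq> 0" "?h s \<noteq> 0" for t s
  proof -
    have "dist (x - c) t \<le> 2" "dist x s \<le> 1"
      using that blur_kernel_eq_0[of t x c] by (auto simp: indicator_def)
    then have "norm c \<le> dist t s + 3"
      using dist_triangle[of x "x - c" t] dist_triangle[of x t s]
      by (simp add: dist_norm norm_minus_commute)
    with c show ?thesis
      by simp
  qed
  have pairing: "integrable lborel (\<lambda>\<omega>. fourier ?f \<omega> * cnj (fourier ?h \<omega>))"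
    using slice unfolding conv_stft_cball_eq_fourier[OF \<psi>] stft_cball_window .
  have "(\<integral>\<omega>. fourier ?f \<omega> * cnj (fourier ?h \<omega>) \<partial>lborel) = 0"
    by (rule integral_fourier_mult_cnj_eq_0_if_separated[OF integrable_mult_blur_kernel[OF \<psi>] h _ pairing])
       (fact separated)
  then show ?thesis
    unfolding conv_stft_cball_eq_fourier[OF \<psi>] stft_cball_window .
qed

lemma blur_is_zero_cball:
  assumes c: "4 \<le> norm c"
  shows "blur_is_zero (indicator (cball (c, 0) 1)) (indicator (cball (0::'a::euclidean_space) 1))"
  unfolding blur_is_zero_def
proof (intro allI impI)
  fix \<psi> g :: "'a \<Rightarrow> complex"
  assume \<psi>: "L2 \<psi>" and g: "L2 g"
  let ?I = "\<lambda>z. conv (indicator (cball (c, 0) 1)) (stft (indicator (cball 0 1)) \<psi>) z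
                * cnj (stft (indicator (cball 0 1)) g z)"
  show "blur_pairing (indicator (cball (c, 0) 1)) (indicator (cball 0 1)) \<psi> g = 0"
  proof (cases "integrable lborel ?I")
    \<comment> \<open>otherwise the pairing is 0 as a junk value of the Bochner integral\<close>
    case True
    then have I: "integrable (lborel \<Otimes>\<^sub>M lborel) ?I"
      by (simp add: lborel_prod)
    have "AE x in lborel. (\<integral>\<omega>. ?I (x, \<omega>) \<partial>lborel) = 0"
      using lborel_pair.AE_integrable_fst'[OF I]
      by eventually_elim (rule blur_pairing_slice_eq_0[OF \<psi> g c])
    then have "(\<integral>x. \<integral>\<omega>. ?I (x, \<omega>) \<partial>lborel \<partial>lborel) = 0"
      by (simp add: integral_eq_zero_AE)
    then show ?thesis
      using lborel_pair.integral_fst'[OF I] by (simp add: blur_pairing_def lborel_prod)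
  qed (simp add: blur_pairing_def not_integrable_integral_eq)
qed

lemma nonzero_ae_indicator_cball:
  assumes "r > 0"
  shows "nonzero_ae (indicator (cball (c::'b::euclidean_space) r))"
  unfolding nonzero_ae_def
proof
  assume "AE x in lborel. indicator (cball c r) x = (0::complex)"
  then have "cball c r \<in> null_sets lborel"
    by (subst AE_iff_null_sets) (auto elim!: AE_mp simp: indicator_def)
  then have "emeasure lborel (cball c r) = 0"
    by auto
  then show False
    using assms unit_ball_vol_pos[of "real DIM('b)"] by (simp add: emeasure_cball)
qed

lemma L2_indicator_cball: "L2 (indicator (cball (c::'a::euclidean_space) r))"
proof -
  have "(\<lambda>t. (cmod (indicator (cball c r) t))\<^sup>2) = indicator (cball c r)"
    by (auto simp: fun_eq_iff indicator_def)
  moreover have "integrable lborel (indicator (cball c r) :: 'a \<Rightarrow> real)"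
    using emeasure_bounded_finite[of "cball c r"] by (simp add: integrable_real_indicator)
  ultimately show ?thesis
    unfolding L2_def by (simp add: borel_measurable_indicator)
qed

theorem proposition4p8:
  "\<exists>(\<phi> :: 'a::euclidean_space \<Rightarrow> complex) (\<mu> :: 'a \<times> 'a \<Rightarrow> complex).
     L2 \<phi> \<and> nonzero_ae \<phi> \<and> L1 \<mu> \<and> nonzero_ae \<mu> \<and> blur_is_zero \<mu> \<phi>"
proof -
  obtain b :: 'a where "b \<in> Basis"
    using nonempty_Basis by blast
  then have "4 \<le> norm (4 *\<^sub>R b)"
    by simp
  moreover have "L1 (indicator (cball (4 *\<^sub>R b, 0::'a) 1) :: _ \<Rightarrow> complex)"
    unfolding L1_def by (rule integrable_indicator_complex) (auto simp: emeasure_cball)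
  ultimately show ?thesis
    by (intro exI[of _ "indicator (cball 0 1)"] exI[of _ "indicator (cball (4 *\<^sub>R b, 0) 1)"]
        conjI L2_indicator_cball nonzero_ae_indicator_cball blur_is_zero_cball) auto
qed

end
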